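(* For all $x>0$ and $y>0$, $$\Gamma(x,y)\ \ge\ \exp\big((x+y-2)\,\Gamma'(1)\big).$$
   Context: For $x>0,y>0$ the Bigamma function is the (convergent) improper integral $\Gamma(x,y):=\int_0^1(-\ln t)^{x-1}\big(-\ln(1-t)\big)^{y-1}\,dt$. $\Gamma'(1)$ is the derivative at $1$ of Euler's gamma function $\Gamma(x)=\int_0^\infty t^{x-1}e^{-t}dt$. *)

theory Defs
  imports "HOL-Analysis.Analysis"
begin

text \<open>Bigamma function: the (convergent, nonnegative-integrand) improper integral
  over (0,1), rendered as a Lebesgue integral.\<close>
definition Bigamma :: "real \<Rightarrow> real \<Rightarrow> real" where
  "Bigamma x y = (LBINT t:{0<..<1}. (- ln t) powr (x - 1) * (- ln (1 - t)) powr (y - 1))"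

end

theory Submission imports Defs begin

text \<open>Put \<open>L t = ln (- ln t)\<close>. On \<open>(0,1)\<close>, a set of measure 1, the Bigamma integrand is
  \<open>exp ((x - 1) * L t + (y - 1) * L (1 - t))\<close>, so Jensen's inequality for \<open>exp\<close> (in the form of its
  tangent line at the mean) bounds \<open>Bigamma x y\<close> below by \<open>exp ((x + y - 2) * \<integral>L)\<close>, using that
  \<open>t \<mapsto> 1 - t\<close> preserves \<open>\<integral>L\<close>. The same argument applied to \<open>Gamma z = \<integral>(- ln t) powr (z - 1)\<close>
  gives \<open>Gamma z \<ge> exp ((z - 1) * \<integral>L)\<close> with equality at \<open>z = 1\<close>, which forces \<open>Gamma' 1 = \<integral>L\<close>.\<close>

lemma has_integral_reflect_interval:
  fixes f :: "real \<Rightarrow> 'a::banach"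
  assumes "(f has_integral c) {a<..<b}"
  shows "((\<lambda>t. f (a + b - t)) has_integral c) {a<..<b}"
proof -
  have "(f has_integral c) {a..b}"
    using assms has_integral_Icc_iff_Ioo by blast
  from has_integral_affinity[of f c a b "-1" "a + b"] this
  have "((\<lambda>t. f (a + b - t)) has_integral c) {a..b}"
    by (simp add: image_affinity_atLeastAtMost)
  then show ?thesis
    using has_integral_Icc_iff_Ioo by blast
qed

lemma minus_ln_powr_has_integral:
  fixes h :: real
  assumes "h > -1"
  shows "((\<lambda>t. (- ln t) powr h) has_integral Gamma (h + 1)) {0<..<1}"
proof -
  define F where "F t = (- ln t) powr h" for t :: real
  have "((\<lambda>u. u powr (h + 1 - 1) / exp u) has_integral Gamma (h + 1)) {0..}"
    using assms by (intro Gamma_integral_real) simp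
  then have "((\<lambda>u. u powr (h + 1 - 1) / exp u) has_integral Gamma (h + 1)) {0<..}"
    by (rule has_integral_spike_set_eq[THEN iffD1, rotated -1])
       (auto intro: negligible_subset[of "{0}"])
  then have subst: "((\<lambda>u. \<bar>- exp (- u)\<bar> * F (exp (- u))) has_integral Gamma (h + 1)) {0<..}"
    by (rule has_integral_eq[rotated]) (simp add: F_def ln_inverse exp_minus divide_inverse mult.commute)
  have image: "(\<lambda>u. exp (- u)) ` {0<..} = {0<..<1::real}"
  proof (intro set_eqI iffI)
    fix t :: real assume "t \<in> {0<..<1}"
    then have "t = exp (- (- ln t))" "- ln t \<in> {0<..}" by auto
    then show "t \<in> (\<lambda>u. exp (- u)) ` {0<..}" by blast
  qed auto
  have "(\<lambda>u. \<bar>- exp (- u)\<bar> * F (exp (- u))) absolutely_integrable_on {0<..} \<and>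
        integral {0<..} (\<lambda>u. \<bar>- exp (- u)\<bar> * F (exp (- u))) = Gamma (h + 1)"
    using subst by (auto intro!: nonnegative_absolutely_integrable_1 simp: integrable_on_def F_def)
  then have "F absolutely_integrable_on {0<..<1} \<and> integral {0<..<1} F = Gamma (h + 1)"
    unfolding image[symmetric]
    by (subst (asm) has_absolute_integral_change_of_variables_1')
       (auto intro!: derivative_eq_intros inj_onI)
  then show ?thesis
    unfolding F_def by (metis has_integral_integral set_lebesgue_integral_eq_integral(1))
qed

lemma minus_ln_one_minus_powr_has_integral:
  fixes h :: real
  assumes "h > -1"
  shows "((\<lambda>t. (- ln (1 - t)) powr h) has_integral Gamma (h + 1)) {0<..<1}"
  using has_integral_reflect_interval[OF minus_ln_powr_has_integral[OF assms]] by simp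

lemma abs_ln_le_powr_half:
  fixes v :: real
  assumes "v > 0"
  shows "\<bar>ln v\<bar> \<le> 2 * v powr (1/2) + 2 * v powr (-1/2)"
proof -
  define w where "w = v powr (1/2)"
  have w: "w > 0" "ln v = 2 * ln w" "v powr (-1/2) = 1 / w"
    using assms by (simp_all add: w_def ln_powr powr_minus_divide flip: powr_minus)
  have "ln w \<le> w" "- ln w \<le> 1 / w" "1 / w > 0"
    using w ln_le_minus_one[of w] ln_le_minus_one[of "1/w"] by (simp_all add: ln_div)
  with w(1) show ?thesis
    unfolding abs_le_iff w(2,3) w_def[symmetric] by linarith
qed

lemma ln_minus_ln_absolutely_integrable:
  "(\<lambda>t. ln (- ln t)) absolutely_integrable_on {0<..<1::real}"
proof (rule measurable_bounded_by_integrable_imp_absolutely_integrable)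
  show "(\<lambda>t. ln (- ln t)) \<in> borel_measurable (lebesgue_on {0<..<1::real})"
    by (rule continuous_imp_measurable_on_sets_lebesgue)
       (auto intro!: continuous_intros)
  show "(\<lambda>t. 2 * (- ln t) powr (1/2) + 2 * (- ln t) powr (-1/2)) integrable_on {0<..<1::real}"
    using minus_ln_powr_has_integral[of "1/2"] minus_ln_powr_has_integral[of "-1/2"]
    by (intro integrable_add integrable_on_mult_right) (auto simp: integrable_on_def)
  show "norm (ln (- ln t)) \<le> 2 * (- ln t) powr (1/2) + 2 * (- ln t) powr (-1/2)"
    if "t \<in> {0<..<1}" for t :: real
    using that abs_ln_le_powr_half[of "- ln t"] by simp
qed auto

lemma exp_integral_le_integral_exp:
  fixes f :: "'a::euclidean_space \<Rightarrow> real"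
  assumes "((\<lambda>x. 1 :: real) has_integral 1) S" and "f integrable_on S"
    and "(\<lambda>x. exp (f x)) integrable_on S"
  shows "exp (integral S f) \<le> integral S (\<lambda>x. exp (f x))"
proof -
  define c where "c = integral S f"
  have "((\<lambda>x. exp c * ((1 - c) * 1 + f x)) has_integral exp c * ((1 - c) * 1 + c)) S"
    unfolding c_def
    using assms(1) integrable_integral[OF assms(2)]
    by (intro has_integral_mult_right has_integral_add) auto
  then have "exp c = integral S (\<lambda>x. exp c * ((1 - c) * 1 + f x))"
    by (auto dest: integral_unique)
  also have "\<dots> \<le> integral S (\<lambda>x. exp (f x))"
  proof (rule integral_le)
    show "(\<lambda>x. exp c * ((1 - c) * 1 + f x)) integrable_on S"
      using assms by (intro integrable_on_mult_right integrable_add) (auto simp: integrable_on_def)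
    show "exp c * ((1 - c) * 1 + f x) \<le> exp (f x)" for x
      \<comment> \<open>the tangent line of \<open>exp\<close> at \<open>c\<close>\<close>
      using exp_ge_add_one_self[of "f x - c"]
      by (simp add: exp_diff field_simps)
  qed (use assms in auto)
  finally show ?thesis
    unfolding c_def .
qed

lemma has_integral_one_unit_interval: "((\<lambda>t. 1 :: real) has_integral 1) {0<..<1::real}"
  using has_integral_const_real[of "1::real" 0 1] has_integral_Icc_iff_Ioo[of "\<lambda>t. 1::real" 1 0 1]
  by simp

lemma Gamma_ge_exp_integral_ln_minus_ln:
  fixes z :: real
  assumes "z > 0"
  shows "exp ((z - 1) * integral {0<..<1} (\<lambda>t. ln (- ln t))) \<le> Gamma z"
proof -
  have L: "(\<lambda>t. ln (- ln t)) integrable_on {0<..<1::real}"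
    by (rule set_lebesgue_integral_eq_integral(1)[OF ln_minus_ln_absolutely_integrable])
  have G: "((\<lambda>t. (- ln t) powr (z - 1)) has_integral Gamma z) {0<..<1}"
    using minus_ln_powr_has_integral[of "z - 1"] assms by simp
  have E: "((\<lambda>t. exp ((z - 1) * ln (- ln t))) has_integral Gamma z) {0<..<1}"
    using G by (rule has_integral_eq[rotated]) (simp add: powr_def mult.commute)
  have "exp ((z - 1) * integral {0<..<1} (\<lambda>t. ln (- ln t))) =
        exp (integral {0<..<1} (\<lambda>t. (z - 1) * ln (- ln t)))"
    using L by simp
  also have "\<dots> \<le> integral {0<..<1} (\<lambda>t. exp ((z - 1) * ln (- ln t)))"
    using has_integral_one_unit_interval integrable_on_mult_right[OF L] E
    by (intro exp_integral_le_integral_exp) (auto simp: integrable_on_def)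
  also have "\<dots> = Gamma z"
    using E by (rule integral_unique)
  finally show ?thesis .
qed

lemma deriv_Gamma_1_eq_integral:
  "deriv (Gamma :: real \<Rightarrow> real) 1 = integral {0<..<1} (\<lambda>t. ln (- ln t))"
proof -
  define A where "A = integral {0<..<1::real} (\<lambda>t. ln (- ln t))"
  have "1 \<notin> (\<int>\<^sub>\<le>\<^sub>0 :: real set)"
    by (auto elim!: nonpos_Ints_cases)
  then have D: "((Gamma :: real \<Rightarrow> real) has_field_derivative Gamma 1 * Digamma 1) (at 1)"
    by (rule has_field_derivative_Gamma)
  \<comment> \<open>\<open>Gamma z - exp ((z - 1) * A)\<close> is nonnegative and vanishes at \<open>z = 1\<close>\<close>
  have D': "((\<lambda>z. Gamma z - exp ((z - 1) * A)) has_field_derivative Gamma 1 * Digamma 1 - A) (at 1)"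
    using D by (auto intro!: derivative_eq_intros)
  have min: "\<forall>z. \<bar>1 - z\<bar> < 1 \<longrightarrow> Gamma 1 - exp ((1 - 1) * A) \<le> Gamma z - exp ((z - 1) * A)"
    using Gamma_ge_exp_integral_ln_minus_ln by (auto simp: A_def)
  from DERIV_local_min[OF D' zero_less_one min] have "Gamma 1 * Digamma 1 = A"
    by simp
  with DERIV_imp_deriv[OF D] show ?thesis
    by (simp add: A_def)
qed

lemma powr_mult_powr_le_powr_add:
  fixes a b \<theta> p q :: real
  assumes "a > 0" "b > 0" "0 < \<theta>" "\<theta> < 1"
  shows "a powr p * b powr q \<le> a powr (p / \<theta>) + b powr (q / (1 - \<theta>))"
proof -
  have "a powr p * b powr q = (a powr (p / \<theta>)) powr \<theta> * (b powr (q / (1 - \<theta>))) powr (1 - \<theta>)"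
    using assms by (simp add: powr_powr)
  also have "\<dots> \<le> \<theta> * a powr (p / \<theta>) + (1 - \<theta>) * b powr (q / (1 - \<theta>))"
    using assms by (intro Youngs_inequality_0) auto
  also have "\<dots> \<le> a powr (p / \<theta>) + b powr (q / (1 - \<theta>))"
    using assms by (intro add_mono mult_left_le_one_le) auto
  finally show ?thesis .
qed

lemma powr_mult_powr_le_of_max_ge:
  fixes a b c p q :: real
  assumes "a > 0" "b > 0" "c > 0" "max a b \<ge> c" "p \<le> 0" "q \<le> 0"
  shows "a powr p * b powr q \<le> c powr p * b powr q + c powr q * a powr p"
proof (cases "a \<ge> c")
  case True
  then have "a powr p * b powr q \<le> c powr p * b powr q"
    using assms by (intro mult_right_mono powr_mono2') auto
  then show ?thesis
    by (simp add: add_increasing2)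
next
  case False
  then have "b powr q * a powr p \<le> c powr q * a powr p"
    using assms by (intro mult_right_mono powr_mono2') auto
  then show ?thesis
    by (simp add: add_increasing mult.commute)
qed

lemma max_minus_ln_ge_ln2:
  fixes t :: real
  assumes "t \<in> {0<..<1}"
  shows "max (- ln t) (- ln (1 - t)) \<ge> ln 2"
proof (cases "t \<le> 1/2")
  case True
  then have "ln t \<le> ln (1/2)"
    using assms by (subst ln_le_cancel_iff) auto
  then show ?thesis
    by (simp add: ln_div)
next
  case False
  then have "ln (1 - t) \<le> ln (1/2)"
    using assms by (subst ln_le_cancel_iff) auto
  then show ?thesis
    by (simp add: ln_div)
qed

lemma Bigamma_integrand_absolutely_integrable:
  fixes p q :: real
  assumes p: "p > -1" and q: "q > -1"
  shows "(\<lambda>t. (- ln t) powr p * (- ln (1 - t)) powr q) absolutely_integrable_on {0<..<1}"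
proof -
  obtain g where g: "g integrable_on {0<..<1}"
    "\<And>t. t \<in> {0<..<1} \<Longrightarrow> (- ln t) powr p * (- ln (1 - t)) powr q \<le> g t"
  proof (cases "p + q > -1")
    case True
    \<comment> \<open>this \<open>\<theta>\<close> makes both Young exponents \<open>p / \<theta>\<close> and \<open>q / (1 - \<theta>)\<close> exceed \<open>-1\<close>\<close>
    define \<theta> where "\<theta> = (1 + q) / (2 + p + q)"
    have \<theta>: "0 < \<theta>" "\<theta> < 1"
      using p q by (auto simp: \<theta>_def field_simps)
    have "p / \<theta> + 1 = (p + 1) * (p + q + 1) / (1 + q)"
         "q / (1 - \<theta>) + 1 = (q + 1) * (p + q + 1) / (1 + p)"
      using p q by (auto simp: \<theta>_def field_simps)
    then have "p / \<theta> > -1" "q / (1 - \<theta>) > -1"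
      using p q True by (smt (verit) divide_pos_pos mult_pos_pos)+
    then show thesis
      using minus_ln_powr_has_integral minus_ln_one_minus_powr_has_integral \<theta>
      by (intro that[of "\<lambda>t. (- ln t) powr (p / \<theta>) + (- ln (1 - t)) powr (q / (1 - \<theta>))"]
          integrable_add powr_mult_powr_le_powr_add) (auto simp: integrable_on_def)
  next
    case False
    then have "p \<le> 0" "q \<le> 0"
      using p q by linarith+
    then show thesis
      using max_minus_ln_ge_ln2 minus_ln_powr_has_integral[OF p] minus_ln_one_minus_powr_has_integral[OF q]
      by (intro that[of "\<lambda>t. ln 2 powr p * (- ln (1 - t)) powr q + ln 2 powr q * (- ln t) powr p"]
          integrable_add integrable_on_mult_right powr_mult_powr_le_of_max_ge)
         (auto simp: integrable_on_def)
  qed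
  show ?thesis
  proof (rule measurable_bounded_by_integrable_imp_absolutely_integrable[OF _ _ g(1)])
    show "(\<lambda>t. (- ln t) powr p * (- ln (1 - t)) powr q) \<in> borel_measurable (lebesgue_on {0<..<1})"
      by (rule continuous_imp_measurable_on_sets_lebesgue) (auto intro!: continuous_intros)
    show "norm ((- ln t) powr p * (- ln (1 - t)) powr q) \<le> g t" if "t \<in> {0<..<1}" for t
      using g(2)[OF that] by simp
  qed auto
qed

lemma Bigamma_eq_integral:
  fixes x y :: real
  assumes "x > 0" and "y > 0"
  shows "Bigamma x y = integral {0<..<1} (\<lambda>t. (- ln t) powr (x - 1) * (- ln (1 - t)) powr (y - 1))"
proof -
  define E where "E t = (- ln t) powr (x - 1) * (- ln (1 - t)) powr (y - 1)" for t :: real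
  have "(\<lambda>t. indicator {0<..<1::real} t *\<^sub>R E t) \<in> borel_measurable lborel"
    unfolding E_def by measurable
  then have "Bigamma x y = (LINT t:{0<..<1}|lebesgue. E t)"
    unfolding Bigamma_def set_lebesgue_integral_def E_def by (simp add: integral_completion)
  also have "\<dots> = integral {0<..<1} E"
    using assms Bigamma_integrand_absolutely_integrable[of "x - 1" "y - 1"]
    by (intro set_lebesgue_integral_eq_integral(2)) (simp add: E_def)
  finally show ?thesis
    unfolding E_def .
qed

theorem mainTheorem11:
  fixes x y :: real
  assumes "x > 0" and "y > 0"
  shows "Bigamma x y \<ge> exp ((x + y - 2) * deriv (Gamma :: real \<Rightarrow> real) 1)"
proof -
  define L :: "real \<Rightarrow> real" where "L = (\<lambda>t. ln (- ln t))"
  define A where "A = integral {0<..<1} L"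
  have "(L has_integral A) {0<..<1}"
    using ln_minus_ln_absolutely_integrable unfolding A_def L_def
    by (intro integrable_integral set_lebesgue_integral_eq_integral(1))
  then have exponent: "((\<lambda>t. (x - 1) * L t + (y - 1) * L (1 - t)) has_integral
      (x - 1) * A + (y - 1) * A) {0<..<1}"
    using has_integral_reflect_interval[of L A 0 1]
    by (intro has_integral_add has_integral_mult_right) auto
  have "(\<lambda>t. (- ln t) powr (x - 1) * (- ln (1 - t)) powr (y - 1)) absolutely_integrable_on {0<..<1}"
    using assms by (intro Bigamma_integrand_absolutely_integrable) auto
  then have "((\<lambda>t. (- ln t) powr (x - 1) * (- ln (1 - t)) powr (y - 1)) has_integral Bigamma x y) {0<..<1}"
    unfolding Bigamma_eq_integral[OF assms]
    by (intro integrable_integral set_lebesgue_integral_eq_integral(1))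
  then have Bigamma: "((\<lambda>t. exp ((x - 1) * L t + (y - 1) * L (1 - t))) has_integral Bigamma x y)
      {0<..<1}"
    by (rule has_integral_eq[rotated]) (simp add: L_def powr_def exp_add mult.commute)
  have "exp (integral {0<..<1} (\<lambda>t. (x - 1) * L t + (y - 1) * L (1 - t))) \<le>
        integral {0<..<1} (\<lambda>t. exp ((x - 1) * L t + (y - 1) * L (1 - t)))"
    using exponent Bigamma
    by (intro exp_integral_le_integral_exp[OF has_integral_one_unit_interval])
       (auto simp: integrable_on_def)
  then have "exp ((x - 1) * A + (y - 1) * A) \<le> Bigamma x y"
    unfolding integral_unique[OF exponent] integral_unique[OF Bigamma] .
  then show ?thesis
    using deriv_Gamma_1_eq_integral by (simp add: A_def L_def algebra_simps)
qed

end
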